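(* Let $R$ be an irreducible root system spanning a rational vector space $L$. Then for every nonzero linear function $l\in L^*$ there is a Weyl chamber $C\subset L$ of $R$ such that $\overline C\subset l^+$ and $\overline C\cap l^0=\{0\}$, where $l^+=\{x\in L\mid l(x)\geqslant0\}$, $l^0=\{x\in L\mid l(x)=0\}$ and $\overline C$ is the closure of $C$ in $L$. *)

theory Defs
  imports "HOL-Analysis.Analysis"
begin

text \<open>The rational vector space L is modelled as rat^'n (a finite-dimensional
  Q-vector space with a chosen basis; 'n is an arbitrary finite index type).\<close>

definition qlinear :: "(rat ^ 'n \<Rightarrow> rat) \<Rightarrow> bool" where
  "qlinear f \<longleftrightarrow> (\<forall>x y. f (x + y) = f x + f y) \<and> (\<forall>c x. f (c *s x) = c * f x)"

definition qspan :: "(rat ^ 'n) set \<Rightarrow> (rat ^ 'n) set" where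
  "qspan S = {x. \<exists>T c. finite T \<and> T \<subseteq> S \<and> x = (\<Sum>v\<in>T. c v *s v)}"

definition qsubspace :: "(rat ^ 'n) set \<Rightarrow> bool" where
  "qsubspace V \<longleftrightarrow> 0 \<in> V \<and> (\<forall>x\<in>V. \<forall>y\<in>V. x + y \<in> V) \<and> (\<forall>c. \<forall>x\<in>V. c *s x \<in> V)"

text \<open>f is a coroot of alpha: the map x \<mapsto> x - f(x) alpha is a reflection with
  vector alpha mapping R onto itself, and f takes integer values on R.\<close>
definition is_coroot :: "(rat ^ 'n) set \<Rightarrow> rat ^ 'n \<Rightarrow> (rat ^ 'n \<Rightarrow> rat) \<Rightarrow> bool" where
  "is_coroot R \<alpha> f \<longleftrightarrow> qlinear f \<and> f \<alpha> = 2 \<and>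
     (\<forall>\<beta>\<in>R. \<beta> - f \<beta> *s \<alpha> \<in> R \<and> f \<beta> \<in> \<int>)"

definition root_system :: "(rat ^ 'n) set \<Rightarrow> bool" where
  "root_system R \<longleftrightarrow> finite R \<and> 0 \<notin> R \<and> qspan R = UNIV \<and>
     (\<forall>\<alpha>\<in>R. \<exists>f. is_coroot R \<alpha> f)"

definition coroot :: "(rat ^ 'n) set \<Rightarrow> rat ^ 'n \<Rightarrow> (rat ^ 'n \<Rightarrow> rat)" where
  "coroot R \<alpha> = (THE f. is_coroot R \<alpha> f)"

definition irreducible_root_system :: "(rat ^ 'n) set \<Rightarrow> bool" where
  "irreducible_root_system R \<longleftrightarrow> root_system R \<and>
     \<not> (\<exists>V1 V2. qsubspace V1 \<and> qsubspace V2 \<and> V1 \<noteq> {0} \<and> V2 \<noteq> {0} \<and>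
          V1 \<inter> V2 = {0} \<and> {x + y | x y. x \<in> V1 \<and> y \<in> V2} = UNIV \<and> R \<subseteq> V1 \<union> V2)"

text \<open>Weyl chambers: the connected components of the complement of the reflecting
  hyperplanes ker(coroot alpha), i.e. the nonempty sign-cells
  {x. sgn (coroot alpha x) = sgn (coroot alpha x0) for all alpha}.\<close>
definition weyl_chamber :: "(rat ^ 'n) set \<Rightarrow> (rat ^ 'n) set \<Rightarrow> bool" where
  "weyl_chamber R C \<longleftrightarrow> (\<exists>x0. (\<forall>\<alpha>\<in>R. coroot R \<alpha> x0 \<noteq> 0) \<and>
      C = {x. \<forall>\<alpha>\<in>R. sgn (coroot R \<alpha> x) = sgn (coroot R \<alpha> x0)})"

definition qclosure :: "(rat ^ 'n) set \<Rightarrow> (rat ^ 'n) set" where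
  "qclosure S = {x. \<forall>e::rat. e > 0 \<longrightarrow> (\<exists>y\<in>S. \<forall>i. \<bar>y $ i - x $ i\<bar> < e)}"

end

theory Submission
  imports Defs
begin

text \<open>
  Averaging the standard inner product over the finite group of linear automorphisms
  of \<open>R\<close> gives an invariant inner product \<open>(_, _)\<close>, for which the coroot of \<open>\<alpha>\<close> is
  \<open>x \<mapsto> 2 (\<alpha>, x) / (\<alpha>, \<alpha>)\<close>; so the Weyl chambers are the sign cells of the
  functionals \<open>(\<alpha>, _)\<close>. Irreducibility means that a reflection-invariant subspace
  containing a root is all of \<open>L\<close>. By this form of Schur's lemma the Casimir operator
  \<open>x \<mapsto> \<Sum>\<^sub>\<alpha> (\<alpha>, x) \<alpha>\<close> is a positive multiple of the identity, whence every linear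
  \<open>l\<close> satisfies \<open>l x = c \<Sum>\<^sub>\<alpha> l(\<alpha>) (\<alpha>, x)\<close> with \<open>c > 0\<close>.

  Perturb the vector representing \<open>l\<close> to a regular \<open>x\<^sub>0\<close> such that \<open>(\<alpha>, x\<^sub>0)\<close> has
  the sign of \<open>l(\<alpha>)\<close> whenever \<open>l(\<alpha>) \<noteq> 0\<close>, and let \<open>C\<close> be its chamber. On the closure
  of \<open>C\<close> every term \<open>l(\<alpha>) (\<alpha>, x)\<close> is nonnegative, so \<open>l \<ge> 0\<close> there; and \<open>l x = 0\<close>
  forces \<open>x\<close> to be orthogonal to all roots outside \<open>ker l\<close>, which span \<open>L\<close> by
  irreducibility, so \<open>x = 0\<close>.
\<close>

interpretation functional:
  vector_space_pair "(*s) :: rat \<Rightarrow> rat ^ 'n \<Rightarrow> rat ^ 'n" "(*) :: rat \<Rightarrow> rat \<Rightarrow> rat"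
  by (simp add: vector_space_pair_def vec.vector_space_axioms
      vector_space_over_itself.vector_space_axioms)

lemma qlinear_iff_linear: "qlinear f \<longleftrightarrow> Vector_Spaces.linear (*s) (*) f"
  unfolding qlinear_def Vector_Spaces.linear_iff
  using vec.vector_space_axioms vector_space_over_itself.vector_space_axioms by auto

lemmas qlinear_0 = functional.linear_0[folded qlinear_iff_linear]
  and qlinear_add = functional.linear_add[folded qlinear_iff_linear]
  and qlinear_scale = functional.linear_scale[folded qlinear_iff_linear]
  and qlinear_neg = functional.linear_neg[folded qlinear_iff_linear]
  and qlinear_diff = functional.linear_diff[folded qlinear_iff_linear]
  and qlinear_sum = functional.linear_sum[folded qlinear_iff_linear]
  and qlinear_eq_0_on_span = functional.linear_eq_0_on_span[folded qlinear_iff_linear]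

lemma qspan_eq_span: "qspan S = vec.span S"
  unfolding qspan_def vec.span_explicit by blast

lemma qsubspace_eq_subspace: "qsubspace V = vec.subspace V"
  unfolding qsubspace_def vec.subspace_def by blast

lemma qlinear_abs_le:
  assumes f: "qlinear f" and x: "\<And>i. \<bar>x $ i\<bar> \<le> e"
  shows "\<bar>f x\<bar> \<le> e * (\<Sum>i\<in>UNIV. \<bar>f (axis i 1)\<bar>)"
proof -
  have "f x = f (\<Sum>i\<in>UNIV. x $ i *s axis i 1)"
    by (simp only: basis_expansion)
  also have "\<dots> = (\<Sum>i\<in>UNIV. x $ i * f (axis i 1))"
    by (simp add: qlinear_sum[OF f] qlinear_scale[OF f])
  finally have "\<bar>f x\<bar> \<le> (\<Sum>i\<in>UNIV. \<bar>x $ i\<bar> * \<bar>f (axis i 1)\<bar>)"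
    by (simp add: sum_abs flip: abs_mult)
  also have "\<dots> \<le> (\<Sum>i\<in>UNIV. e * \<bar>f (axis i 1)\<bar>)"
    by (intro sum_mono mult_right_mono x) simp
  finally show ?thesis
    by (simp add: sum_distrib_left)
qed

lemma qclosure_subset_halfspace:
  assumes f: "qlinear f" and S: "S \<subseteq> {x. 0 \<le> f x}"
  shows "qclosure S \<subseteq> {x. 0 \<le> f x}"
proof
  fix x assume x: "x \<in> qclosure S"
  show "x \<in> {x. 0 \<le> f x}"
  proof (rule ccontr)
    assume "x \<notin> {x. 0 \<le> f x}"
    then have neg: "f x < 0" by simp
    define K where "K = (\<Sum>i\<in>UNIV. \<bar>f (axis i 1)\<bar>)"
    define e where "e = - f x / (K + 1)"
    have "0 \<le> K" unfolding K_def by (simp add: sum_nonneg)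
    then have "0 < e" and eK: "e * K < - f x"
      using neg by (simp_all add: e_def field_simps)
    then obtain y where "y \<in> S" and y: "\<And>i. \<bar>y $ i - x $ i\<bar> < e"
      using x unfolding qclosure_def by blast
    have "\<bar>f (y - x)\<bar> \<le> e * K"
      unfolding K_def using y by (intro qlinear_abs_le f) (simp add: less_imp_le)
    moreover have "0 \<le> f y" using \<open>y \<in> S\<close> S by blast
    ultimately show False
      using eK by (simp add: qlinear_diff[OF f])
  qed
qed

lemma zero_in_qclosure:
  assumes "\<And>t. 0 < t \<Longrightarrow> t *s x \<in> S"
  shows "0 \<in> qclosure S"
  unfolding qclosure_def
proof (intro CollectI allI impI)
  fix e :: rat assume "0 < e"
  define M where "M = (\<Sum>i\<in>UNIV. \<bar>x $ i\<bar>)"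
  define t where "t = e / (M + 1)"
  have "0 \<le> M" unfolding M_def by (simp add: sum_nonneg)
  then have "0 < t" using \<open>0 < e\<close> by (simp add: t_def)
  have "\<bar>(t *s x) $ i - 0 $ i\<bar> < e" for i
  proof -
    have "\<bar>x $ i\<bar> \<le> M" unfolding M_def by (rule member_le_sum) auto
    then have "t * \<bar>x $ i\<bar> \<le> t * M"
      using \<open>0 < t\<close> by (simp add: mult_left_mono)
    also have "\<dots> < e"
      using \<open>0 < e\<close> \<open>0 \<le> M\<close> by (simp add: t_def field_simps)
    finally have "t * \<bar>x $ i\<bar> < e" .
    then show ?thesis using \<open>0 < t\<close> by (simp add: abs_mult)
  qed
  then show "\<exists>y\<in>S. \<forall>i. \<bar>y $ i - 0 $ i\<bar> < e"
    using assms \<open>0 < t\<close> by blast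
qed

lemma finite_shift_closed_eq_0:
  fixes S :: "(rat ^ 'n) set"
  assumes "finite S" and "\<alpha> \<noteq> 0" and h: "qlinear h" and "h \<alpha> = 0"
    and closed: "\<And>y. y \<in> S \<Longrightarrow> y + h y *s \<alpha> \<in> S"
    and x: "x \<in> S"
  shows "h x = 0"
proof (rule ccontr)
  assume "h x \<noteq> 0"
  have h_shift: "h (y + c *s \<alpha>) = h y" for y c
    using \<open>h \<alpha> = 0\<close> by (simp add: qlinear_add[OF h] qlinear_scale[OF h])
  have "x + (of_nat k * h x) *s \<alpha> \<in> S" for k
  proof (induction k)
    case 0
    then show ?case using x by simp
  next
    case (Suc k)
    then have "(x + (of_nat k * h x) *s \<alpha>) + h x *s \<alpha> \<in> S"
      using closed[of "x + (of_nat k * h x) *s \<alpha>"] by (simp add: h_shift)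
    then show ?case by (simp add: vec_eq_iff algebra_simps)
  qed
  then have "range (\<lambda>k::nat. x + (of_nat k * h x) *s \<alpha>) \<subseteq> S"
    by blast
  then have "finite (range (\<lambda>k::nat. x + (of_nat k * h x) *s \<alpha>))"
    using \<open>finite S\<close> by (rule finite_subset)
  moreover have "inj (\<lambda>k::nat. x + (of_nat k * h x) *s \<alpha>)"
    using \<open>h x \<noteq> 0\<close> \<open>\<alpha> \<noteq> 0\<close> by (intro injI) (simp add: vec.scale_cancel_right)
  ultimately have "finite (UNIV :: nat set)"
    by (rule finite_imageD)
  then show False
    by simp
qed

lemma sgn_add_abs_less:
  fixes a b :: "'a::linordered_idom"
  assumes "\<bar>b\<bar> < \<bar>a\<bar>"
  shows "sgn (a + b) = sgn a"
proof (cases "0 < a")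
  case True
  then show ?thesis using assms by (simp add: abs_less_iff)
next
  case False
  then have "a < 0" using assms by (cases "a = 0") auto
  then show ?thesis using assms by (simp add: abs_less_iff)
qed

lemma sgn_eq_imp_mult_nonneg:
  fixes a b :: "'a::linordered_idom"
  shows "sgn a = sgn b \<Longrightarrow> 0 \<le> a * b"
  by (auto simp: sgn_if zero_le_mult_iff split: if_splits)

lemma mult_nonneg_sgn_cong:
  fixes a b c :: "'a::linordered_idom"
  shows "sgn a = sgn b \<Longrightarrow> 0 \<le> a * c \<Longrightarrow> 0 \<le> b * c"
  by (auto simp: sgn_if zero_le_mult_iff split: if_splits)

lemma exists_sgn_stable_perturbation:
  fixes p q :: "'a \<Rightarrow> 'b::linordered_field"
  assumes "finite S" and "\<And>a. a \<in> S \<Longrightarrow> p a \<noteq> 0"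
  shows "\<exists>t>0. \<forall>a\<in>S. sgn (p a + t * q a) = sgn (p a)"
proof -
  define t where "t = Min (insert 1 ((\<lambda>a. \<bar>p a\<bar> / (\<bar>q a\<bar> + 1)) ` S))"
  have "0 < t" using assms by (simp add: t_def)
  moreover have "sgn (p a + t * q a) = sgn (p a)" if "a \<in> S" for a
  proof -
    have "t \<le> \<bar>p a\<bar> / (\<bar>q a\<bar> + 1)"
      unfolding t_def using assms(1) that by (intro Min_le) auto
    then have "t * \<bar>q a\<bar> < \<bar>p a\<bar>"
      using \<open>0 < t\<close> assms(2)[OF that] by (simp add: field_simps)
    then have "\<bar>t * q a\<bar> < \<bar>p a\<bar>"
      using \<open>0 < t\<close> by (simp add: abs_mult)
    then show ?thesis by (rule sgn_add_abs_less)
  qed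
  ultimately show ?thesis by blast
qed

locale rational_root_system =
  fixes R :: "(rat ^ 'n) set"
  assumes root_system: "root_system R"
begin

lemma finite_roots: "finite R"
  and zero_notin_roots: "0 \<notin> R"
  and span_roots: "vec.span R = UNIV"
  using root_system by (auto simp: root_system_def qspan_eq_span)

lemma roots_nonempty: "R \<noteq> {}"
proof
  assume "R = {}"
  then have "(UNIV :: (rat ^ 'n) set) = {0}"
    using span_roots by simp
  moreover have "(axis undefined 1 :: rat ^ 'n) \<noteq> 0"
    by (simp add: axis_eq_0_iff)
  ultimately show False
    by (metis UNIV_I singletonD)
qed

lemma is_coroot_unique:
  assumes \<alpha>: "\<alpha> \<in> R" and f: "is_coroot R \<alpha> f" and g: "is_coroot R \<alpha> g"
  shows "f = g"
proof -
  define h where "h x = g x - f x" for x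
  have lin_f: "qlinear f" and "qlinear g"
    using f g by (auto simp: is_coroot_def)
  then have lin_h: "qlinear h"
    by (simp add: qlinear_def h_def algebra_simps)
  \<comment> \<open>Reflecting along \<open>g\<close> and then along \<open>f\<close> translates each root \<open>x\<close>
    by \<open>h x *s \<alpha>\<close>.\<close>
  have shift_root: "x + h x *s \<alpha> \<in> R" if "x \<in> R" for x
  proof -
    have "x - g x *s \<alpha> \<in> R" using g that by (simp add: is_coroot_def)
    then have "(x - g x *s \<alpha>) - f (x - g x *s \<alpha>) *s \<alpha> \<in> R"
      using f by (simp add: is_coroot_def)
    also have "f (x - g x *s \<alpha>) = f x - 2 * g x"
      using f by (simp add: is_coroot_def qlinear_diff[OF lin_f] qlinear_scale[OF lin_f])
    also have "x - g x *s \<alpha> - (f x - 2 * g x) *s \<alpha> = x + h x *s \<alpha>"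
      by (simp add: h_def vec_eq_iff algebra_simps)
    finally show ?thesis .
  qed
  have "h \<alpha> = 0"
    using f g by (simp add: is_coroot_def h_def)
  moreover have "\<alpha> \<noteq> 0"
    using \<alpha> zero_notin_roots by blast
  ultimately have "h x = 0" if "x \<in> R" for x
    using finite_shift_closed_eq_0[OF finite_roots _ lin_h _ shift_root that] by blast
  then have "h x = 0" for x
    using qlinear_eq_0_on_span[OF lin_h] span_roots by blast
  then show ?thesis
    by (auto simp: h_def)
qed

lemma is_coroot_coroot: "\<alpha> \<in> R \<Longrightarrow> is_coroot R \<alpha> (coroot R \<alpha>)"
  using root_system is_coroot_unique unfolding coroot_def root_system_def by (metis theI)

lemma qlinear_coroot: "\<alpha> \<in> R \<Longrightarrow> qlinear (coroot R \<alpha>)"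
  and coroot_self: "\<alpha> \<in> R \<Longrightarrow> coroot R \<alpha> \<alpha> = 2"
  and coroot_reflect_root: "\<alpha> \<in> R \<Longrightarrow> \<beta> \<in> R \<Longrightarrow> \<beta> - coroot R \<alpha> \<beta> *s \<alpha> \<in> R"
  using is_coroot_coroot by (auto simp: is_coroot_def)

definition reflect :: "rat ^ 'n \<Rightarrow> rat ^ 'n \<Rightarrow> rat ^ 'n" where
  "reflect \<alpha> x = x - coroot R \<alpha> x *s \<alpha>"

lemma linear_reflect: "\<alpha> \<in> R \<Longrightarrow> Vector_Spaces.linear (*s) (*s) (reflect \<alpha>)"
  unfolding reflect_def[abs_def]
  by (intro vec.linear_compose_sub vec.linear_ident vec.linear_compose_scale)
    (simp add: qlinear_coroot flip: qlinear_iff_linear)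

lemma reflect_self: "\<alpha> \<in> R \<Longrightarrow> reflect \<alpha> \<alpha> = - \<alpha>"
  by (simp add: reflect_def coroot_self vec_eq_iff)

lemma reflect_reflect: "\<alpha> \<in> R \<Longrightarrow> reflect \<alpha> (reflect \<alpha> x) = x"
  by (simp add: reflect_def qlinear_diff qlinear_scale qlinear_coroot coroot_self vec_eq_iff
      algebra_simps)

lemma bij_betw_reflect:
  assumes "\<alpha> \<in> R"
  shows "bij_betw (reflect \<alpha>) R R"
proof -
  have maps: "reflect \<alpha> \<in> R \<rightarrow> R"
    using assms coroot_reflect_root by (simp add: reflect_def)
  show ?thesis
    by (rule bij_betwI[OF maps maps]) (simp_all add: assms reflect_reflect)
qed

definition automorphisms :: "(rat ^ 'n \<Rightarrow> rat ^ 'n) set" where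
  "automorphisms = {g. Vector_Spaces.linear (*s) (*s) g \<and> g ` R = R}"

lemma linear_eq_on_roots:
  assumes "Vector_Spaces.linear (*s) (*s) g" "Vector_Spaces.linear (*s) (*s) h"
    and "\<And>x. x \<in> R \<Longrightarrow> g x = h x"
  shows "g = h"
  using vec.linear_eq_on_span[OF assms] span_roots by auto

lemma finite_automorphisms: "finite automorphisms"
proof -
  have inj: "inj_on (\<lambda>g. restrict g R) automorphisms"
  proof (rule inj_onI)
    fix g h
    assume g: "g \<in> automorphisms" and h: "h \<in> automorphisms"
      and eq: "restrict g R = restrict h R"
    have "g x = h x" if "x \<in> R" for x
      using fun_cong[OF eq, of x] that by simp
    then show "g = h"
      using g h by (intro linear_eq_on_roots) (auto simp: automorphisms_def)
  qed
  have "(\<lambda>g. restrict g R) ` automorphisms \<subseteq> R \<rightarrow>\<^sub>E R"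
    by (auto simp: automorphisms_def)
  moreover have "finite (R \<rightarrow>\<^sub>E R)"
    by (intro finite_PiE finite_roots)
  ultimately have "finite ((\<lambda>g. restrict g R) ` automorphisms)"
    by (rule finite_subset)
  then show ?thesis
    using inj by (rule finite_imageD)
qed

lemma id_automorphism: "id \<in> automorphisms"
  by (simp add: automorphisms_def vec.linear_id)

lemma comp_automorphism:
  assumes "g \<in> automorphisms" and "h \<in> automorphisms"
  shows "g \<circ> h \<in> automorphisms"
proof -
  have "(g \<circ> h) ` R = g ` h ` R"
    by (rule image_comp[symmetric])
  also have "\<dots> = R"
    using assms by (simp add: automorphisms_def)
  finally have "(g \<circ> h) ` R = R" .
  then show ?thesis
    using assms by (auto simp: automorphisms_def intro: Vector_Spaces.linear_compose)
qed

lemma reflect_automorphism: "\<alpha> \<in> R \<Longrightarrow> reflect \<alpha> \<in> automorphisms"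
  by (simp add: automorphisms_def linear_reflect bij_betw_reflect bij_betw_imp_surj_on)

definition inv_inner :: "rat ^ 'n \<Rightarrow> rat ^ 'n \<Rightarrow> rat" where
  "inv_inner x y = (\<Sum>g\<in>automorphisms. \<Sum>i\<in>UNIV. g x $ i * g y $ i)"

lemma inv_inner_sym: "inv_inner x y = inv_inner y x"
  by (simp add: inv_inner_def mult.commute)

lemma qlinear_inv_inner_left: "qlinear (\<lambda>x. inv_inner x y)"
  by (auto simp: qlinear_def inv_inner_def automorphisms_def vec.linear_add vec.linear_scale
      algebra_simps sum.distrib sum_distrib_left)

lemma qlinear_inv_inner_right: "qlinear (inv_inner x)"
proof -
  have "inv_inner x = (\<lambda>y. inv_inner y x)"
    by (rule ext) (rule inv_inner_sym)
  then show ?thesis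
    using qlinear_inv_inner_left by simp
qed

lemmas inv_inner_scale_left = qlinear_scale[OF qlinear_inv_inner_left]
  and inv_inner_diff_left = qlinear_diff[OF qlinear_inv_inner_left]
  and inv_inner_add_right = qlinear_add[OF qlinear_inv_inner_right]
  and inv_inner_scale_right = qlinear_scale[OF qlinear_inv_inner_right]
  and inv_inner_minus_right = qlinear_neg[OF qlinear_inv_inner_right]
  and inv_inner_sum_right = qlinear_sum[OF qlinear_inv_inner_right]

lemma inv_inner_pos:
  assumes "x \<noteq> 0"
  shows "0 < inv_inner x x"
proof -
  obtain i where "x $ i \<noteq> 0"
    using assms by (auto simp: vec_eq_iff)
  then have "0 < x $ i * x $ i"
    by (auto simp: zero_less_mult_iff linorder_neq_iff)
  then have "0 < (\<Sum>i\<in>UNIV. id x $ i * id x $ i)"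
    by (intro sum_pos2[of UNIV i]) auto
  also have "\<dots> \<le> inv_inner x x"
    unfolding inv_inner_def
    using member_le_sum[of id automorphisms "\<lambda>g. \<Sum>i\<in>UNIV. g x $ i * g x $ i"]
      id_automorphism finite_automorphisms by (simp add: sum_nonneg)
  finally show ?thesis .
qed

lemma inv_inner_root_pos: "\<alpha> \<in> R \<Longrightarrow> 0 < inv_inner \<alpha> \<alpha>"
  using zero_notin_roots by (intro inv_inner_pos) auto

lemma inv_inner_automorphism:
  assumes h: "h \<in> automorphisms"
  shows "inv_inner (h x) (h y) = inv_inner x y"
proof -
  have "inj_on (\<lambda>g. g \<circ> h) automorphisms"
  proof (rule inj_onI)
    fix g g'
    assume g: "g \<in> automorphisms" and g': "g' \<in> automorphisms" and eq: "g \<circ> h = g' \<circ> h"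
    have "g (h x) = g' (h x)" for x
      using fun_cong[OF eq, of x] by simp
    moreover have "x \<in> h ` R" if "x \<in> R" for x
      using h that by (simp add: automorphisms_def)
    ultimately have "g x = g' x" if "x \<in> R" for x
      using that by blast
    then show "g = g'"
      using g g' by (intro linear_eq_on_roots) (auto simp: automorphisms_def)
  qed
  moreover have "(\<lambda>g. g \<circ> h) ` automorphisms \<subseteq> automorphisms"
    using h comp_automorphism by blast
  ultimately have "bij_betw (\<lambda>g. g \<circ> h) automorphisms automorphisms"
    by (simp add: bij_betw_def endo_inj_surj[OF finite_automorphisms])
  from sum.reindex_bij_betw[OF this, of "\<lambda>g. \<Sum>i\<in>UNIV. g x $ i * g y $ i"]
  show ?thesis
    by (simp add: inv_inner_def)
qed

lemma inv_inner_eq_0_on_span: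
  "(\<And>\<alpha>. \<alpha> \<in> S \<Longrightarrow> inv_inner \<alpha> x = 0) \<Longrightarrow> y \<in> vec.span S \<Longrightarrow> inv_inner y x = 0"
  by (rule qlinear_eq_0_on_span[OF qlinear_inv_inner_left])

lemma coroot_inv_inner:
  assumes \<alpha>: "\<alpha> \<in> R"
  shows "coroot R \<alpha> x * inv_inner \<alpha> \<alpha> = 2 * inv_inner \<alpha> x"
proof -
  have "inv_inner x \<alpha> = inv_inner (reflect \<alpha> x) (reflect \<alpha> \<alpha>)"
    using \<alpha> by (simp add: inv_inner_automorphism reflect_automorphism)
  also have "\<dots> = coroot R \<alpha> x * inv_inner \<alpha> \<alpha> - inv_inner x \<alpha>"
    using \<alpha> by (simp add: reflect_self reflect_def[of \<alpha> x] inv_inner_diff_left inv_inner_scale_left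
        inv_inner_minus_right)
  finally show ?thesis
    by (simp add: inv_inner_sym)
qed

lemma sgn_coroot:
  assumes \<alpha>: "\<alpha> \<in> R"
  shows "sgn (coroot R \<alpha> x) = sgn (inv_inner \<alpha> x)"
proof -
  have pos: "0 < inv_inner \<alpha> \<alpha>"
    using \<alpha> by (rule inv_inner_root_pos)
  then have "coroot R \<alpha> x = (2 / inv_inner \<alpha> \<alpha>) * inv_inner \<alpha> x"
    using coroot_inv_inner[OF \<alpha>, of x] by (simp add: field_simps)
  moreover have "sgn (2 / inv_inner \<alpha> \<alpha>) = 1"
    using pos by simp
  ultimately show ?thesis
    by (simp add: sgn_mult)
qed

definition casimir :: "rat ^ 'n \<Rightarrow> rat ^ 'n" where
  "casimir x = (\<Sum>\<alpha>\<in>R. inv_inner \<alpha> x *s \<alpha>)"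

lemma linear_casimir: "Vector_Spaces.linear (*s) (*s) casimir"
  unfolding casimir_def[abs_def]
  by (intro vec.linear_compose_sum ballI vec.linear_compose_scale)
    (simp add: qlinear_inv_inner_right flip: qlinear_iff_linear)

lemma casimir_reflect:
  assumes \<beta>: "\<beta> \<in> R"
  shows "casimir (reflect \<beta> x) = reflect \<beta> (casimir x)"
proof -
  have "casimir (reflect \<beta> x) = (\<Sum>\<alpha>\<in>R. inv_inner (reflect \<beta> \<alpha>) (reflect \<beta> x) *s reflect \<beta> \<alpha>)"
    unfolding casimir_def
    using sum.reindex_bij_betw[OF bij_betw_reflect[OF \<beta>],
        of "\<lambda>\<alpha>. inv_inner \<alpha> (reflect \<beta> x) *s \<alpha>"] by simp
  also have "\<dots> = (\<Sum>\<alpha>\<in>R. inv_inner \<alpha> x *s reflect \<beta> \<alpha>)"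
    using \<beta> by (simp add: inv_inner_automorphism reflect_automorphism)
  also have "\<dots> = reflect \<beta> (casimir x)"
    unfolding casimir_def
    by (simp add: vec.linear_sum[OF linear_reflect[OF \<beta>]]
        vec.linear_scale[OF linear_reflect[OF \<beta>]])
  finally show ?thesis .
qed

lemma casimir_root:
  assumes \<alpha>: "\<alpha> \<in> R"
  shows "\<exists>c>0. casimir \<alpha> = c *s \<alpha>"
proof -
  have pos: "0 < inv_inner \<alpha> \<alpha>"
    using \<alpha> by (rule inv_inner_root_pos)
  define c where "c = inv_inner \<alpha> (casimir \<alpha>) / inv_inner \<alpha> \<alpha>"
  \<comment> \<open>The reflection along \<open>\<alpha>\<close> negates \<open>casimir \<alpha>\<close>, so \<open>casimir \<alpha>\<close> lies on the
    line through \<open>\<alpha>\<close>.\<close>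
  have "reflect \<alpha> (casimir \<alpha>) = - casimir \<alpha>"
    using casimir_reflect[OF \<alpha>, of \<alpha>] \<alpha> by (simp add: reflect_self vec.linear_neg[OF linear_casimir])
  then have "casimir \<alpha> = (coroot R \<alpha> (casimir \<alpha>) / 2) *s \<alpha>"
    by (simp add: reflect_def vec_eq_iff field_simps)
  also have "coroot R \<alpha> (casimir \<alpha>) / 2 = c"
    using coroot_inv_inner[OF \<alpha>, of "casimir \<alpha>"] pos by (simp add: c_def field_simps)
  finally have "casimir \<alpha> = c *s \<alpha>" .
  have "inv_inner \<alpha> \<alpha> * inv_inner \<alpha> \<alpha> \<le> (\<Sum>\<beta>\<in>R. inv_inner \<alpha> \<beta> * inv_inner \<alpha> \<beta>)"
    using member_le_sum[of \<alpha> R "\<lambda>\<beta>. inv_inner \<alpha> \<beta> * inv_inner \<alpha> \<beta>"] \<alpha> finite_roots by simp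
  also have "\<dots> = inv_inner \<alpha> (casimir \<alpha>)"
    by (simp add: casimir_def inv_inner_sum_right inv_inner_scale_right inv_inner_sym)
  finally have "0 < inv_inner \<alpha> (casimir \<alpha>)"
    using mult_pos_pos[OF pos pos] by linarith
  then have "0 < c"
    using pos by (simp add: c_def)
  with \<open>casimir \<alpha> = c *s \<alpha>\<close> show ?thesis
    by blast
qed

lemma inv_inner_sgn_stable_perturbation:
  assumes "finite S"
  shows "\<exists>t>0. \<forall>\<alpha>\<in>S. inv_inner \<alpha> v \<noteq> 0 \<longrightarrow>
                  sgn (inv_inner \<alpha> (v + t *s w)) = sgn (inv_inner \<alpha> v)"
proof -
  have "finite {\<alpha>\<in>S. inv_inner \<alpha> v \<noteq> 0}"
    using assms by simp
  from exists_sgn_stable_perturbation[OF this, of "\<lambda>\<alpha>. inv_inner \<alpha> v" "\<lambda>\<alpha>. inv_inner \<alpha> w"]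
  show ?thesis
    by (simp add: inv_inner_add_right inv_inner_scale_right) blast
qed

lemma exists_regular: "\<exists>u. \<forall>\<alpha>\<in>R. inv_inner \<alpha> u \<noteq> 0"
proof -
  have "\<exists>u. \<forall>\<alpha>\<in>S. inv_inner \<alpha> u \<noteq> 0" if "S \<subseteq> R" for S
    using finite_subset[OF that finite_roots] that
  proof (induction S rule: finite_induct)
    case empty
    then show ?case by simp
  next
    case (insert \<beta> S)
    then obtain u where u: "\<forall>\<alpha>\<in>S. inv_inner \<alpha> u \<noteq> 0"
      by auto
    obtain t where "0 < t" and t: "\<forall>\<alpha>\<in>insert \<beta> S. inv_inner \<alpha> u \<noteq> 0 \<longrightarrow>
        sgn (inv_inner \<alpha> (u + t *s \<beta>)) = sgn (inv_inner \<alpha> u)"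
      using inv_inner_sgn_stable_perturbation[of "insert \<beta> S" u \<beta>] insert.hyps(1) by blast
    have "inv_inner \<alpha> (u + t *s \<beta>) \<noteq> 0" if \<alpha>: "\<alpha> \<in> insert \<beta> S" for \<alpha>
    proof (cases "inv_inner \<alpha> u = 0")
      case True
      then have "\<alpha> = \<beta>"
        using u \<alpha> by auto
      then show ?thesis
        using True \<open>0 < t\<close> inv_inner_root_pos[of \<beta>] insert.prems
        by (simp add: inv_inner_add_right inv_inner_scale_right)
    next
      case False
      then show ?thesis
        using t \<alpha> by (metis sgn_0_0)
    qed
    then show ?case
      by blast
  qed
  then show ?thesis
    by blast
qed

lemma exists_regular_refining:
  "\<exists>x0. (\<forall>\<alpha>\<in>R. inv_inner \<alpha> x0 \<noteq> 0) \<and>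
        (\<forall>\<alpha>\<in>R. inv_inner \<alpha> v \<noteq> 0 \<longrightarrow> sgn (inv_inner \<alpha> x0) = sgn (inv_inner \<alpha> v))"
proof -
  obtain u where u: "\<forall>\<alpha>\<in>R. inv_inner \<alpha> u \<noteq> 0"
    using exists_regular by blast
  obtain t where "0 < t" and t: "\<forall>\<alpha>\<in>R. inv_inner \<alpha> v \<noteq> 0 \<longrightarrow>
      sgn (inv_inner \<alpha> (v + t *s u)) = sgn (inv_inner \<alpha> v)"
    using inv_inner_sgn_stable_perturbation[OF finite_roots] by blast
  have "inv_inner \<alpha> (v + t *s u) \<noteq> 0" if \<alpha>: "\<alpha> \<in> R" for \<alpha>
  proof (cases "inv_inner \<alpha> v = 0")
    case True
    then show ?thesis
      using u \<alpha> \<open>0 < t\<close> by (simp add: inv_inner_add_right inv_inner_scale_right)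
  next
    case False
    then show ?thesis
      using t \<alpha> by (metis sgn_0_0)
  qed
  with t show ?thesis
    by blast
qed

definition chamber :: "rat ^ 'n \<Rightarrow> (rat ^ 'n) set" where
  "chamber x0 = {x. \<forall>\<alpha>\<in>R. sgn (inv_inner \<alpha> x) = sgn (inv_inner \<alpha> x0)}"

lemma weyl_chamber_chamber:
  assumes "\<forall>\<alpha>\<in>R. inv_inner \<alpha> x0 \<noteq> 0"
  shows "weyl_chamber R (chamber x0)"
proof -
  have "coroot R \<alpha> x0 \<noteq> 0" if "\<alpha> \<in> R" for \<alpha>
    using assms that sgn_coroot by (metis sgn_0_0)
  moreover have "chamber x0 = {x. \<forall>\<alpha>\<in>R. sgn (coroot R \<alpha> x) = sgn (coroot R \<alpha> x0)}"
    by (simp add: chamber_def sgn_coroot)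
  ultimately show ?thesis
    unfolding weyl_chamber_def by blast
qed

lemma qclosure_chamber:
  assumes x: "x \<in> qclosure (chamber x0)" and \<alpha>: "\<alpha> \<in> R"
  shows "0 \<le> inv_inner \<alpha> x0 * inv_inner \<alpha> x"
proof -
  have "qlinear (\<lambda>y. inv_inner \<alpha> x0 * inv_inner \<alpha> y)"
    by (simp add: qlinear_def inv_inner_add_right inv_inner_scale_right algebra_simps)
  moreover have "chamber x0 \<subseteq> {y. 0 \<le> inv_inner \<alpha> x0 * inv_inner \<alpha> y}"
    using \<alpha> by (auto simp: chamber_def intro: sgn_eq_imp_mult_nonneg)
  ultimately show ?thesis
    using qclosure_subset_halfspace x by blast
qed

lemma zero_in_qclosure_chamber: "0 \<in> qclosure (chamber x0)"
  by (rule zero_in_qclosure[of x0]) (simp add: chamber_def inv_inner_scale_right sgn_mult)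

lemma qclosure_chamber_mult_nonneg:
  assumes refines: "\<forall>\<alpha>\<in>R. f \<alpha> \<noteq> 0 \<longrightarrow> sgn (inv_inner \<alpha> x0) = sgn (f \<alpha>)"
    and x: "x \<in> qclosure (chamber x0)" and \<alpha>: "\<alpha> \<in> R"
  shows "0 \<le> f \<alpha> * inv_inner \<alpha> x"
proof (cases "f \<alpha> = 0")
  case False
  then have "sgn (inv_inner \<alpha> x0) = sgn (f \<alpha>)"
    using refines \<alpha> by blast
  then show ?thesis
    using qclosure_chamber[OF x \<alpha>] by (rule mult_nonneg_sgn_cong)
qed simp

end

locale irreducible_rational_root_system = rational_root_system +
  assumes irreducible: "irreducible_root_system R"
begin

lemma roots_orthogonal_split:
  assumes split: "R1 \<union> R2 = R"
    and orthogonal: "\<And>\<alpha> \<beta>. \<alpha> \<in> R1 \<Longrightarrow> \<beta> \<in> R2 \<Longrightarrow> inv_inner \<alpha> \<beta> = 0"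
  shows "R1 = {} \<or> R2 = {}"
proof (rule ccontr)
  assume "\<not> (R1 = {} \<or> R2 = {})"
  then obtain \<alpha> \<beta> where "\<alpha> \<in> R1" "\<beta> \<in> R2"
    by blast
  define V1 where "V1 = vec.span R1"
  define V2 where "V2 = vec.span R2"
  have "V1 \<inter> V2 \<subseteq> {0}"
  proof
    fix z
    assume z: "z \<in> V1 \<inter> V2"
    have "inv_inner \<alpha> z = 0" if \<alpha>: "\<alpha> \<in> R1" for \<alpha>
    proof -
      have "inv_inner z \<alpha> = 0"
      proof (rule inv_inner_eq_0_on_span[of R2])
        show "inv_inner \<beta> \<alpha> = 0" if "\<beta> \<in> R2" for \<beta>
          using orthogonal[OF \<alpha> that] by (simp add: inv_inner_sym)
        show "z \<in> vec.span R2"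
          using z by (simp add: V2_def)
      qed
      then show ?thesis
        by (simp add: inv_inner_sym)
    qed
    moreover have "z \<in> vec.span R1"
      using z by (simp add: V1_def)
    ultimately have "inv_inner z z = 0"
      by (rule inv_inner_eq_0_on_span)
    then show "z \<in> {0}"
      using inv_inner_pos[of z] by (cases "z = 0") auto
  qed
  then have "V1 \<inter> V2 = {0}"
    by (auto simp: V1_def V2_def vec.span_zero)
  moreover have "{x + y | x y. x \<in> V1 \<and> y \<in> V2} = UNIV"
    using vec.span_Un[of R1 R2] split span_roots by (simp add: V1_def V2_def)
  moreover have "R \<subseteq> V1 \<union> V2"
    using split by (auto simp: V1_def V2_def intro: vec.span_base)
  moreover have "\<alpha> \<in> V1" and "\<beta> \<in> V2"
    using \<open>\<alpha> \<in> R1\<close> \<open>\<beta> \<in> R2\<close> by (simp_all add: V1_def V2_def vec.span_base)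
  moreover have "\<alpha> \<noteq> 0" and "\<beta> \<noteq> 0"
    using \<open>\<alpha> \<in> R1\<close> \<open>\<beta> \<in> R2\<close> split zero_notin_roots by auto
  moreover have "qsubspace V1" and "qsubspace V2"
    by (simp_all add: V1_def V2_def qsubspace_eq_subspace)
  ultimately show False
    using irreducible unfolding irreducible_root_system_def by blast
qed

lemma reflection_invariant_subspace:
  assumes U: "vec.subspace U"
    and invariant: "\<And>\<beta> u. \<beta> \<in> R \<Longrightarrow> u \<in> U \<Longrightarrow> reflect \<beta> u \<in> U"
    and \<alpha>: "\<alpha> \<in> R" "\<alpha> \<in> U"
  shows "U = UNIV"
proof -
  \<comment> \<open>A root \<open>\<beta>\<close> outside \<open>U\<close> is orthogonal to \<open>U\<close>, because \<open>u - reflect \<beta> u\<close>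
    is a multiple of \<open>\<beta>\<close> lying in \<open>U\<close>.\<close>
  have orthogonal: "inv_inner u \<beta> = 0" if "\<beta> \<in> R - U" and u: "u \<in> U" for u \<beta>
  proof (rule ccontr)
    assume "inv_inner u \<beta> \<noteq> 0"
    then have "coroot R \<beta> u \<noteq> 0"
      using sgn_coroot[of \<beta> u] that by (metis inv_inner_sym sgn_0_0 DiffD1)
    have "u - reflect \<beta> u \<in> U"
      using that invariant by (intro vec.subspace_diff[OF U]) auto
    then have "coroot R \<beta> u *s \<beta> \<in> U"
      by (simp add: reflect_def)
    then have "(1 / coroot R \<beta> u) *s (coroot R \<beta> u *s \<beta>) \<in> U"
      by (rule vec.subspace_scale[OF U])
    then show False
      using \<open>coroot R \<beta> u \<noteq> 0\<close> that by simp
  qed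
  have "R - U = {}"
    using roots_orthogonal_split[of "R \<inter> U" "R - U"] orthogonal \<alpha> by blast
  then have "vec.span R \<subseteq> U"
    using U by (intro vec.span_minimal) auto
  then show ?thesis
    using span_roots by blast
qed

lemma casimir_scalar: "\<exists>c>0. \<forall>x. casimir x = c *s x"
proof -
  obtain \<alpha> where \<alpha>: "\<alpha> \<in> R"
    using roots_nonempty by blast
  then obtain c where "0 < c" and c: "casimir \<alpha> = c *s \<alpha>"
    using casimir_root by blast
  have "{x. casimir x = c *s x} = UNIV"
  proof (rule reflection_invariant_subspace)
    have "vec.subspace {x. casimir x - c *s x = 0}"
      by (intro vec.linear_subspace_kernel vec.linear_compose_sub linear_casimir
          vec.linear_scale_self)
    then show "vec.subspace {x. casimir x = c *s x}"
      by simp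
    show "reflect \<beta> u \<in> {x. casimir x = c *s x}" if "\<beta> \<in> R" "u \<in> {x. casimir x = c *s x}" for \<beta> u
      using that by (simp add: casimir_reflect vec.linear_scale[OF linear_reflect])
  qed (use \<alpha> c in auto)
  then show ?thesis
    using \<open>0 < c\<close> by blast
qed

lemma qlinear_root_expansion:
  assumes l: "qlinear l"
  shows "\<exists>c>0. \<forall>x. l x = c * (\<Sum>\<alpha>\<in>R. l \<alpha> * inv_inner \<alpha> x)"
proof -
  obtain c where "0 < c" and c: "\<And>x. casimir x = c *s x"
    using casimir_scalar by blast
  have "l x = (1 / c) * (\<Sum>\<alpha>\<in>R. l \<alpha> * inv_inner \<alpha> x)" for x
  proof -
    have "c * l x = l (casimir x)"
      by (simp add: c qlinear_scale[OF l])
    also have "\<dots> = (\<Sum>\<alpha>\<in>R. l \<alpha> * inv_inner \<alpha> x)"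
      by (simp add: casimir_def qlinear_sum[OF l] qlinear_scale[OF l] mult.commute)
    finally show ?thesis
      using \<open>0 < c\<close> by (simp add: divide_simps mult.commute)
  qed
  moreover have "0 < 1 / c"
    using \<open>0 < c\<close> by simp
  ultimately show ?thesis
    by blast
qed

lemma span_roots_outside_kernel:
  assumes l: "qlinear l" and l_nonzero: "l \<noteq> (\<lambda>_. 0)"
  shows "vec.span {\<alpha>\<in>R. l \<alpha> \<noteq> 0} = UNIV"
proof -
  let ?U = "vec.span {\<alpha>\<in>R. l \<alpha> \<noteq> 0}"
  obtain \<alpha> where \<alpha>: "\<alpha> \<in> R" "l \<alpha> \<noteq> 0"
    using qlinear_eq_0_on_span[OF l _ span_roots[THEN equalityD2, THEN subsetD]] l_nonzero
    by blast
  have "reflect \<beta> u \<in> ?U" if \<beta>: "\<beta> \<in> R" and u: "u \<in> ?U" for \<beta> u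
  proof -
    have "reflect \<beta> \<gamma> \<in> ?U" if \<gamma>: "\<gamma> \<in> R" "l \<gamma> \<noteq> 0" for \<gamma>
    proof (cases "l \<beta> = 0")
      case True
      then have "l (reflect \<beta> \<gamma>) \<noteq> 0"
        using \<gamma> by (simp add: reflect_def qlinear_diff[OF l] qlinear_scale[OF l])
      then show ?thesis
        using \<beta> \<gamma> bij_betw_reflect[OF \<beta>] by (auto intro: vec.span_base dest: bij_betwE)
    next
      case False
      then show ?thesis
        using \<beta> \<gamma> unfolding reflect_def
        by (intro vec.span_diff vec.span_scale vec.span_base) auto
    qed
    then have "?U \<subseteq> reflect \<beta> -` ?U"
      by (intro vec.span_minimal vec.linear_subspace_vimage[OF linear_reflect[OF \<beta>]]) auto
    then show ?thesis
      using u by blast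
  qed
  then show ?thesis
    by (intro reflection_invariant_subspace[OF vec.subspace_span _ \<alpha>(1)])
      (auto intro: vec.span_base simp: \<alpha>)
qed

theorem exists_chamber_in_halfspace:
  assumes l: "qlinear l" and l_nonzero: "l \<noteq> (\<lambda>_. 0)"
  shows "\<exists>C. weyl_chamber R C \<and> qclosure C \<subseteq> {x. l x \<ge> 0} \<and>
             qclosure C \<inter> {x. l x = 0} = {0}"
proof -
  obtain c where "0 < c" and expansion: "\<And>x. l x = c * (\<Sum>\<alpha>\<in>R. l \<alpha> * inv_inner \<alpha> x)"
    using qlinear_root_expansion[OF l] by blast
  define v where "v = c *s (\<Sum>\<beta>\<in>R. l \<beta> *s \<beta>)"
  have "inv_inner \<alpha> v = l \<alpha>" for \<alpha>
    using expansion[of \<alpha>]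
    by (simp add: v_def inv_inner_scale_right inv_inner_sum_right inv_inner_sym)
  then obtain x0 where regular: "\<forall>\<alpha>\<in>R. inv_inner \<alpha> x0 \<noteq> 0"
    and refines: "\<forall>\<alpha>\<in>R. l \<alpha> \<noteq> 0 \<longrightarrow> sgn (inv_inner \<alpha> x0) = sgn (l \<alpha>)"
    using exists_regular_refining[of v] by auto
  note terms_nonneg = qclosure_chamber_mult_nonneg[OF refines]
  have "0 \<le> l x" if "x \<in> qclosure (chamber x0)" for x
    using terms_nonneg[OF that] \<open>0 < c\<close> by (simp add: expansion[of x] sum_nonneg)
  moreover have "x = 0" if x: "x \<in> qclosure (chamber x0)" and "l x = 0" for x
  proof -
    have "(\<Sum>\<alpha>\<in>R. l \<alpha> * inv_inner \<alpha> x) = 0"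
      using expansion[of x] \<open>l x = 0\<close> \<open>0 < c\<close> by simp
    moreover have "(\<Sum>\<alpha>\<in>R. l \<alpha> * inv_inner \<alpha> x) = 0 \<longleftrightarrow>
        (\<forall>\<alpha>\<in>R. l \<alpha> * inv_inner \<alpha> x = 0)"
      by (rule sum_nonneg_eq_0_iff[OF finite_roots]) (rule terms_nonneg[OF x])
    ultimately have "\<forall>\<alpha>\<in>R. l \<alpha> * inv_inner \<alpha> x = 0"
      by blast
    then have "inv_inner \<alpha> x = 0" if "\<alpha> \<in> {\<alpha>\<in>R. l \<alpha> \<noteq> 0}" for \<alpha>
      using that by auto
    then have "inv_inner x x = 0"
      using inv_inner_eq_0_on_span span_roots_outside_kernel[OF l l_nonzero] by blast
    then show "x = 0"
      using inv_inner_pos by force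
  qed
  moreover have "0 \<in> qclosure (chamber x0)" and "l 0 = 0"
    by (simp_all add: zero_in_qclosure_chamber qlinear_0[OF l])
  ultimately show ?thesis
    using weyl_chamber_chamber[OF regular] by (intro exI[of _ "chamber x0"]) auto
qed

end

theorem lemma4:
  fixes R :: "(rat ^ 'n) set" and l :: "rat ^ 'n \<Rightarrow> rat"
  assumes "irreducible_root_system R"
    and "qlinear l" and "l \<noteq> (\<lambda>_. 0)"
  shows "\<exists>C. weyl_chamber R C \<and> qclosure C \<subseteq> {x. l x \<ge> 0} \<and>
             qclosure C \<inter> {x. l x = 0} = {0}"
proof -
  interpret irreducible_rational_root_system R
    using assms(1) by unfold_locales (simp_all add: irreducible_root_system_def)
  show ?thesis
    using assms(2,3) by (rule exists_chamber_in_halfspace)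
qed

end
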